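(* Let $h,b>0$, $\rho=b/(h+b)$, cost $c(x,d)=h(x-d)^++b(d-x)^+$. For $\theta\in[0,1/2]$ let $F_{\theta,1}$ be the CDF of the uniform distribution on $[\theta,1]$, and let $\mathcal F_u=\{F_{\theta,1}:\theta\in[0,1/2]\}$. For a demand CDF $F$ let $C_F(x)=\mathbb{E}_{D\sim F}[c(x,D)]$ and $x_F^*=\arg\min_xC_F(x)$. An admissible policy $\pi=(\pi_t)_{t\ge1}$ maps, in period $t$, the history of $t$ i.i.d. demand samples $(d_1,\dots,d_t)$ from $F$ to an order quantity $x_t^\pi$; let $\Pi$ be the set of admissible policies and $\mathcal R^\pi(F,T)=\sum_{t=1}^T\mathbb{E}[C_F(x_t^\pi)-C_F(x_F^* )]$. Then for every $T\ge1$, $$\inf_{\pi\in\Pi}\sup_{F\in\mathcal F_u}\mathcal R^\pi(F,T)\le(\rho^2+(1-\rho)^2)(h+b).$$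
   Context: Data-driven repeated newsvendor problem with linear overage cost $h$ and underage cost $b$; expectations are over demand samples and any randomness of the policy. *)

theory Defs
  imports "HOL-Probability.Probability"
begin

definition nv_cost :: "real \<Rightarrow> real \<Rightarrow> real \<Rightarrow> real \<Rightarrow> real" where
  "nv_cost h b x d = h * max (x - d) 0 + b * max (d - x) 0"

definition unif_dist :: "real \<Rightarrow> real measure" where
  "unif_dist \<theta> = uniform_measure lborel {\<theta>..1}"

definition exp_cost :: "real \<Rightarrow> real \<Rightarrow> real measure \<Rightarrow> real \<Rightarrow> real" where
  "exp_cost h b F x = (\<integral>d. nv_cost h b x d \<partial>F)"

text \<open>Optimal expected cost C_F(x_F^*) = min_x C_F(x) (the minimum is attained).\<close>
definition opt_cost :: "real \<Rightarrow> real \<Rightarrow> real measure \<Rightarrow> real" where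
  "opt_cost h b F = (INF x. exp_cost h b F x)"

text \<open>Admissible (deterministic, measurable) policies: in period t the order quantity
  is a measurable function of the samples d_1..d_t, stored at indices 0..t-1.\<close>
definition admissible :: "(nat \<Rightarrow> (nat \<Rightarrow> real) \<Rightarrow> real) \<Rightarrow> bool" where
  "admissible \<pi> \<longleftrightarrow> (\<forall>t\<ge>1. \<pi> t \<in> borel_measurable (PiM {..<t} (\<lambda>_. borel)))"

text \<open>Cumulative regret over T periods, samples i.i.d. from F. The instantaneous
  regret is nonnegative, so it is expressed as a nonnegative integral.\<close>
definition regret :: "real \<Rightarrow> real \<Rightarrow> (nat \<Rightarrow> (nat \<Rightarrow> real) \<Rightarrow> real) \<Rightarrow> real measure \<Rightarrow> nat \<Rightarrow> ennreal" where
  "regret h b \<pi> F T = (\<Sum>t=1..T. \<integral>\<^sup>+ ds. ennreal (exp_cost h b F (\<pi> t ds) - opt_cost h b F)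
        \<partial>(PiM {..<t} (\<lambda>_. F)))"

end

theory Submission
  imports Defs
begin

(*
  The optimal order under uniform demand on [theta, 1] is its rho-quantile
  x* = theta + rho (1 - theta), and since that distribution has density 1/(1 - theta), the excess
  expected cost of an order x is at most (h + b) (x - x* )^2 / (1 - theta).  The policy estimates
  theta by the sample minimum m and orders the rho-quantile m + rho (1 - m) of the uniform
  distribution on [m, 1]; its error is (1 - rho) (m - theta), and after t samples
  E (m - theta)^2 = 2 (1 - theta)^2 / ((t + 1) (t + 2)).  The per-period bounds telescope, so the
  regret is at most (h + b) (1 - rho)^2 (1 - theta) <= (rho^2 + (1 - rho)^2) (h + b) for every
  horizon T and every theta in [0, 1/2].
*)

(* The slope -b + (h + b) 1{d \<le> xs} is a subgradient of c(., d) at xs; linearizing there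
   errs by at most the jump h + b of the slope times the distance, and only when d lies between
   x and xs. *)
lemma nv_cost_ge_linearization:
  fixes h b :: real assumes "0 \<le> h" "0 \<le> b"
  shows "nv_cost h b xs d + (- b + (h + b) * indicator {..xs} d) * (y - xs) \<le> nv_cost h b y d"
proof (cases "d \<le> xs")
  case True
  have "h * (y - d) \<le> h * max (y - d) 0" "0 \<le> b * max (d - y) 0"
    using assms by (auto intro: mult_left_mono)
  with True show ?thesis by (simp add: nv_cost_def max_def algebra_simps)
next
  case False
  have "b * (d - y) \<le> b * max (d - y) 0" "0 \<le> h * max (y - d) 0"
    using assms by (auto intro: mult_left_mono)
  with False show ?thesis by (simp add: nv_cost_def max_def algebra_simps)
qed

lemma nv_cost_le_linearization:
  fixes h b :: real assumes "0 \<le> h" "0 \<le> b"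
  shows "nv_cost h b x d \<le> nv_cost h b xs d + (- b + (h + b) * indicator {..xs} d) * (x - xs)
           + (h + b) * \<bar>x - xs\<bar> * indicator {min x xs..max x xs} d"
proof -
  have hb: "0 \<le> h + b" using assms by simp
  have gap_nonneg: "0 \<le> (h + b) * \<bar>x - xs\<bar> * indicator {min x xs..max x xs} d" using hb by simp
  consider "d \<le> xs" "d \<le> x" | "d \<le> xs" "x < d" | "xs < d" "d \<le> x" | "xs < d" "x < d"
    by linarith
  then show ?thesis
  proof cases
    case 2
    have "(h + b) * (d - x) \<le> (h + b) * \<bar>x - xs\<bar>" using 2 hb by (intro mult_left_mono) auto
    with 2 show ?thesis by (simp add: nv_cost_def max_def algebra_simps)
  next
    case 3
    have "(h + b) * (x - d) \<le> (h + b) * \<bar>x - xs\<bar>" using 3 hb by (intro mult_left_mono) auto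
    with 3 show ?thesis by (simp add: nv_cost_def max_def algebra_simps)
  qed (use gap_nonneg in \<open>auto simp: nv_cost_def max_def algebra_simps\<close>)
qed

lemma has_bochner_integral_nv_cost_linearization:
  fixes M :: "real measure"
  assumes "prob_space M" "sets M = sets borel" "integrable M (nv_cost h b xs)"
  shows "has_bochner_integral M (\<lambda>d. nv_cost h b xs d + (- b + (h + b) * indicator {..xs} d) * (y - xs))
           (exp_cost h b M xs + (- b + (h + b) * measure M {..xs}) * (y - xs))"
proof -
  interpret prob_space M by fact
  have "has_bochner_integral M (indicator {..xs}) (prob {..xs})"
    using assms(2) by (intro has_bochner_integral_real_indicator) (auto simp: less_top[symmetric])
  moreover have "has_bochner_integral M (\<lambda>_. - b) (- b)"
    using has_bochner_integral_integrable[OF integrable_const, of "- b"] by (simp add: prob_space)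
  moreover have "has_bochner_integral M (nv_cost h b xs) (exp_cost h b M xs)"
    unfolding exp_cost_def using assms(3) by (rule has_bochner_integral_integrable)
  ultimately show ?thesis
    by (intro has_bochner_integral_add has_bochner_integral_mult_left has_bochner_integral_mult_right)
qed

lemma exp_cost_ge_linearization:
  fixes M :: "real measure"
  assumes "0 \<le> h" "0 \<le> b" "prob_space M" "sets M = sets borel"
    and "\<And>x. integrable M (nv_cost h b x)"
  shows "exp_cost h b M xs + (- b + (h + b) * measure M {..xs}) * (y - xs) \<le> exp_cost h b M y"
proof -
  note lin = has_bochner_integral_nv_cost_linearization[OF assms(3-5), of xs y]
  have "exp_cost h b M xs + (- b + (h + b) * measure M {..xs}) * (y - xs)
      = (\<integral>d. nv_cost h b xs d + (- b + (h + b) * indicator {..xs} d) * (y - xs) \<partial>M)"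
    using lin by (simp add: has_bochner_integral_iff)
  also have "\<dots> \<le> exp_cost h b M y"
    unfolding exp_cost_def using assms lin
    by (intro integral_mono nv_cost_ge_linearization) (auto simp: has_bochner_integral_iff)
  finally show ?thesis .
qed

lemma exp_cost_le_linearization:
  fixes M :: "real measure"
  assumes "0 \<le> h" "0 \<le> b" "prob_space M" "sets M = sets borel"
    and "\<And>x. integrable M (nv_cost h b x)"
  shows "exp_cost h b M x \<le> exp_cost h b M xs + (- b + (h + b) * measure M {..xs}) * (x - xs)
           + (h + b) * \<bar>x - xs\<bar> * measure M {min x xs..max x xs}"
proof -
  interpret prob_space M by fact
  let ?I = "{min x xs..max x xs}"
  have "has_bochner_integral M (\<lambda>d. nv_cost h b xs d + (- b + (h + b) * indicator {..xs} d) * (x - xs)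
           + (h + b) * \<bar>x - xs\<bar> * indicator ?I d)
          (exp_cost h b M xs + (- b + (h + b) * prob {..xs}) * (x - xs) + (h + b) * \<bar>x - xs\<bar> * prob ?I)"
    using assms(4)
    by (intro has_bochner_integral_add[OF has_bochner_integral_nv_cost_linearization[OF assms(3-5)]]
        has_bochner_integral_mult_right has_bochner_integral_real_indicator)
      (auto simp: less_top[symmetric])
  then show ?thesis
    unfolding exp_cost_def has_bochner_integral_iff
    using assms nv_cost_le_linearization[OF assms(1,2)] by (auto intro!: integral_mono elim!: subst)
qed

lemma opt_cost_eq_exp_cost_quantile:
  fixes M :: "real measure"
  assumes "0 < h" "0 < b" "prob_space M" "sets M = sets borel"
    and "\<And>x. integrable M (nv_cost h b x)"
    and "measure M {..xs} = b / (h + b)"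
  shows "opt_cost h b M = exp_cost h b M xs"
proof -
  have "exp_cost h b M xs \<le> exp_cost h b M y" for y
    using exp_cost_ge_linearization[OF _ _ assms(3-5), of xs y] assms by simp
  then show ?thesis
    unfolding opt_cost_def by (intro antisym cINF_greatest cINF_lower bdd_belowI) auto
qed

lemma sets_unif_dist [simp, measurable_cong]: "sets (unif_dist \<theta>) = sets borel"
  by (simp add: unif_dist_def)

lemma space_unif_dist [simp]: "space (unif_dist \<theta>) = UNIV"
  by (simp add: unif_dist_def)

lemma prob_space_unif_dist: "\<theta> < 1 \<Longrightarrow> prob_space (unif_dist \<theta>)"
  unfolding unif_dist_def by (intro prob_space_uniform_measure) auto

lemma measure_unif_dist:
  assumes "\<theta> < 1" "A \<in> sets borel"
  shows "measure (unif_dist \<theta>) A = measure lborel ({\<theta>..1} \<inter> A) / (1 - \<theta>)"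
  unfolding unif_dist_def using assms by (subst measure_uniform_measure) auto

lemma measure_unif_dist_atMost:
  assumes "\<theta> \<le> a" "a \<le> 1" "\<theta> < 1"
  shows "measure (unif_dist \<theta>) {..a} = (a - \<theta>) / (1 - \<theta>)"
proof -
  have "{\<theta>..1} \<inter> {..a} = {\<theta>..a}" using assms by auto
  then show ?thesis using assms by (simp add: measure_unif_dist)
qed

lemma measure_unif_dist_atLeast:
  assumes "\<theta> \<le> a" "a \<le> 1" "\<theta> < 1"
  shows "measure (unif_dist \<theta>) {a..} = (1 - a) / (1 - \<theta>)"
proof -
  have "{\<theta>..1} \<inter> {a..} = {a..1}" using assms by auto
  then show ?thesis using assms by (simp add: measure_unif_dist)
qed

lemma measure_unif_dist_interval_le:
  assumes "a \<le> c" "\<theta> < 1"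
  shows "measure (unif_dist \<theta>) {a..c} \<le> (c - a) / (1 - \<theta>)"
proof -
  have "measure lborel ({\<theta>..1} \<inter> {a..c}) \<le> measure lborel {a..c}"
    by (intro measure_mono_fmeasurable) (auto intro: fmeasurable_compact)
  then show ?thesis
    using assms by (simp add: measure_unif_dist divide_right_mono)
qed

lemma integrable_nv_cost_unif_dist:
  assumes "\<theta> < 1"
  shows "integrable (unif_dist \<theta>) (nv_cost h b x)"
proof -
  interpret prob_space "unif_dist \<theta>" using assms by (rule prob_space_unif_dist)
  have "\<bar>nv_cost h b x d\<bar> \<le> (\<bar>h\<bar> + \<bar>b\<bar>) * (\<bar>x\<bar> + \<bar>\<theta>\<bar> + 1)" if "d \<in> {\<theta>..1}" for d
  proof -
    have "\<bar>nv_cost h b x d\<bar> \<le> (\<bar>h\<bar> + \<bar>b\<bar>) * \<bar>x - d\<bar>"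
      by (auto simp: nv_cost_def max_def abs_mult distrib_right)
    also have "\<dots> \<le> (\<bar>h\<bar> + \<bar>b\<bar>) * (\<bar>x\<bar> + \<bar>\<theta>\<bar> + 1)"
      using that by (intro mult_left_mono) auto
    finally show ?thesis .
  qed
  then have "AE d in unif_dist \<theta>. norm (nv_cost h b x d) \<le> (\<bar>h\<bar> + \<bar>b\<bar>) * (\<bar>x\<bar> + \<bar>\<theta>\<bar> + 1)"
    unfolding unif_dist_def by (intro AE_uniform_measureI) auto
  then show ?thesis
    by (rule integrable_const_bound) (simp add: nv_cost_def)
qed

lemma excess_cost_unif_dist_le:
  assumes "0 < h" "0 < b" "\<theta> < 1"
  shows "exp_cost h b (unif_dist \<theta>) x - opt_cost h b (unif_dist \<theta>)
           \<le> (h + b) * (x - (\<theta> + b / (h + b) * (1 - \<theta>)))\<^sup>2 / (1 - \<theta>)"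
proof -
  define xs where "xs = \<theta> + b / (h + b) * (1 - \<theta>)"
  have "b / (h + b) \<le> 1" using assms by simp
  then have "b / (h + b) * (1 - \<theta>) \<le> 1 - \<theta>"
    using assms by (intro mult_left_le_one_le) auto
  then have "\<theta> \<le> xs" "xs \<le> 1" using assms by (auto simp: xs_def)
  then have quantile: "measure (unif_dist \<theta>) {..xs} = b / (h + b)"
    using assms by (simp add: measure_unif_dist_atMost xs_def)
  note unif = prob_space_unif_dist[OF assms(3)] sets_unif_dist integrable_nv_cost_unif_dist[OF assms(3)]
  have "exp_cost h b (unif_dist \<theta>) x
      \<le> exp_cost h b (unif_dist \<theta>) xs + (h + b) * \<bar>x - xs\<bar> * measure (unif_dist \<theta>) {min x xs..max x xs}"
    using exp_cost_le_linearization[OF _ _ unif, where h = h and b = b and x = x and xs = xs] assms quantile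
    by simp
  also have "\<dots> \<le> exp_cost h b (unif_dist \<theta>) xs + (h + b) * \<bar>x - xs\<bar> * (\<bar>x - xs\<bar> / (1 - \<theta>))"
    using measure_unif_dist_interval_le[of "min x xs" "max x xs" \<theta>] assms
    by (intro add_left_mono mult_left_mono) (auto simp: max_def min_def)
  also have "\<dots> = opt_cost h b (unif_dist \<theta>) + (h + b) * (x - xs)\<^sup>2 / (1 - \<theta>)"
    using opt_cost_eq_exp_cost_quantile[OF assms(1,2) unif quantile]
    by (simp add: power2_eq_square)
  finally show ?thesis by (simp add: xs_def)
qed

lemma nn_integral_linear_times_power:
  fixes L :: real
  assumes "0 \<le> L"
  shows "(\<integral>\<^sup>+s. ennreal (s * (L - s) ^ t) * indicator {0..L} s \<partial>lborel)
           = ennreal (L ^ (t + 2) / ((real t + 1) * (real t + 2)))"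
proof -
  define G where "G s = (L - s) ^ Suc (Suc t) / (real t + 2) - L * (L - s) ^ Suc t / (real t + 1)"
    for s :: real
  have "(G has_real_derivative L * (L - s) ^ t - (L - s) ^ Suc t) (at s)" for s
    unfolding G_def
    by (rule DERIV_cong, (rule derivative_eq_intros refl | simp)+)
      (simp add: divide_simps, simp add: algebra_simps)
  moreover have "L * (L - s) ^ t - (L - s) ^ Suc t = s * (L - s) ^ t" for s
    by (simp add: algebra_simps)
  ultimately have "(\<integral>\<^sup>+s. ennreal (s * (L - s) ^ t) * indicator {0..L} s \<partial>lborel) = ennreal (G L - G 0)"
    using assms by (intro nn_integral_FTC_Icc) auto
  also have "G L - G 0 = L ^ (t + 2) / ((real t + 1) * (real t + 2))"
    by (simp add: G_def field_simps)
  finally show ?thesis .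
qed

lemma nn_integral_square_eq_tail:
  fixes X :: "'a \<Rightarrow> real"
  assumes "sigma_finite_measure M" and [measurable]: "X \<in> borel_measurable M"
    and nonneg: "AE x in M. 0 \<le> X x"
  shows "(\<integral>\<^sup>+x. ennreal ((X x)\<^sup>2) \<partial>M)
           = (\<integral>\<^sup>+s. ennreal (2 * s) * emeasure M {x \<in> space M. s \<le> X x} * indicator {0..} s \<partial>lborel)"
proof -
  interpret pair_sigma_finite M lborel
    unfolding pair_sigma_finite_def using assms(1) lborel.sigma_finite_measure_axioms by auto
  define f where "f x s = (if 0 \<le> s \<and> s \<le> X x then ennreal (2 * s) else 0)" for x s
  have f_measurable: "case_prod f \<in> borel_measurable (M \<Otimes>\<^sub>M lborel)"
    unfolding f_def by measurable
  have "(\<integral>\<^sup>+x. ennreal ((X x)\<^sup>2) \<partial>M) = (\<integral>\<^sup>+x. (\<integral>\<^sup>+s. f x s \<partial>lborel) \<partial>M)"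
  proof (intro nn_integral_cong_AE, use nonneg in eventually_elim)
    fix x assume "0 \<le> X x"
    have "(\<integral>\<^sup>+s. f x s \<partial>lborel) = (\<integral>\<^sup>+s. ennreal (2 * s) * indicator {0..X x} s \<partial>lborel)"
      by (intro nn_integral_cong) (auto simp: f_def)
    also have "\<dots> = ennreal ((X x)\<^sup>2 - 0\<^sup>2)"
      using \<open>0 \<le> X x\<close> by (intro nn_integral_FTC_Icc) (auto intro!: derivative_eq_intros)
    finally show "ennreal ((X x)\<^sup>2) = (\<integral>\<^sup>+s. f x s \<partial>lborel)" by simp
  qed
  also have "\<dots> = (\<integral>\<^sup>+s. (\<integral>\<^sup>+x. f x s \<partial>M) \<partial>lborel)"
    by (rule Fubini'[OF f_measurable, symmetric])
  also have "\<dots> = (\<integral>\<^sup>+s. ennreal (2 * s) * emeasure M {x \<in> space M. s \<le> X x} * indicator {0..} s \<partial>lborel)"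
  proof (intro nn_integral_cong)
    fix s :: real
    have "(\<integral>\<^sup>+x. f x s \<partial>M) = (\<integral>\<^sup>+x. ennreal (2 * s) * indicator {0..} s
            * indicator {x \<in> space M. s \<le> X x} x \<partial>M)"
      by (intro nn_integral_cong) (auto simp: f_def indicator_def)
    also have "\<dots> = ennreal (2 * s) * indicator {0..} s * emeasure M {x \<in> space M. s \<le> X x}"
      by (intro nn_integral_cmult_indicator) measurable
    finally show "(\<integral>\<^sup>+x. f x s \<partial>M)
        = ennreal (2 * s) * emeasure M {x \<in> space M. s \<le> X x} * indicator {0..} s"
      by (simp add: ac_simps)
  qed
  finally show ?thesis .
qed

fun sample_min :: "nat \<Rightarrow> (nat \<Rightarrow> real) \<Rightarrow> real" where
  "sample_min 0 ds = 1"
| "sample_min (Suc t) ds = min (sample_min t ds) (ds t)"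

lemma sample_min_ge_iff: "a \<le> sample_min t ds \<longleftrightarrow> a \<le> 1 \<and> (\<forall>i<t. a \<le> ds i)"
  by (induction t) (auto simp: less_Suc_eq)

lemma sample_min_le_one: "sample_min t ds \<le> 1"
  by (induction t) auto

lemma borel_measurable_sample_min:
  assumes "sets M = sets borel"
  shows "sample_min t \<in> borel_measurable (PiM {..<t} (\<lambda>_. M))"
proof -
  have "sample_min k \<in> borel_measurable (PiM {..<t} (\<lambda>_. M))" if "k \<le> t" for k
    using that
  proof (induction k)
    case 0
    have "sample_min 0 = (\<lambda>_. 1)" by (simp add: fun_eq_iff)
    then show ?case by simp
  next
    case (Suc k)
    then have "(\<lambda>ds. ds k) \<in> measurable (PiM {..<t} (\<lambda>_. M)) M"
      by (intro measurable_component_singleton) auto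
    then have "(\<lambda>ds. ds k) \<in> borel_measurable (PiM {..<t} (\<lambda>_. M))"
      using assms measurable_cong_sets by blast
    with Suc show ?case by simp
  qed
  then show ?thesis by simp
qed

lemma emeasure_sample_min_ge:
  assumes "\<theta> \<le> a" "a \<le> 1" "\<theta> < 1"
  shows "emeasure (PiM {..<t} (\<lambda>_. unif_dist \<theta>)) {ds \<in> space (PiM {..<t} (\<lambda>_. unif_dist \<theta>)). a \<le> sample_min t ds}
           = ennreal (((1 - a) / (1 - \<theta>)) ^ t)"
proof -
  interpret prob_space "unif_dist \<theta>" using assms(3) by (rule prob_space_unif_dist)
  interpret product_sigma_finite "\<lambda>_::nat. unif_dist \<theta>"
    unfolding product_sigma_finite_def using sigma_finite_measure_axioms by auto
  have "{ds \<in> space (PiM {..<t} (\<lambda>_. unif_dist \<theta>)). a \<le> sample_min t ds} = PiE {..<t} (\<lambda>_. {a..})"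
    using assms by (auto simp: sample_min_ge_iff space_PiM PiE_def extensional_def)
  then show ?thesis
    using assms
    by (simp add: emeasure_PiM emeasure_eq_measure measure_unif_dist_atLeast ennreal_power)
qed

lemma nn_integral_sample_min_sq:
  assumes "\<theta> < 1"
  shows "(\<integral>\<^sup>+ds. ennreal ((sample_min t ds - \<theta>)\<^sup>2) \<partial>PiM {..<t} (\<lambda>_. unif_dist \<theta>))
           = ennreal (2 * (1 - \<theta>)\<^sup>2 / ((real t + 1) * (real t + 2)))"
proof -
  let ?M = "PiM {..<t} (\<lambda>_. unif_dist \<theta>)"
  define L where "L = 1 - \<theta>"
  have L: "0 < L" using assms by (simp add: L_def)
  interpret prob_space ?M
    using prob_space_unif_dist[OF assms] by (intro prob_space_PiM) auto
  have [measurable]: "sample_min t \<in> borel_measurable ?M"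
    by (rule borel_measurable_sample_min) simp
  have "prob {ds \<in> space ?M. \<theta> \<le> sample_min t ds} = 1"
    using emeasure_sample_min_ge[of \<theta> \<theta> t] assms by (simp add: emeasure_eq_measure)
  then have "AE ds in ?M. 0 \<le> sample_min t ds - \<theta>"
    by (auto dest: AE_prob_1)
  then have "(\<integral>\<^sup>+ds. ennreal ((sample_min t ds - \<theta>)\<^sup>2) \<partial>?M)
      = (\<integral>\<^sup>+s. ennreal (2 * s) * emeasure ?M {ds \<in> space ?M. s \<le> sample_min t ds - \<theta>}
           * indicator {0..} s \<partial>lborel)"
    by (intro nn_integral_square_eq_tail) (auto intro: sigma_finite_measure_axioms)
  also have "\<dots> = (\<integral>\<^sup>+s. ennreal (2 / L ^ t) * (ennreal (s * (L - s) ^ t) * indicator {0..L} s) \<partial>lborel)"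
  proof (intro nn_integral_cong)
    fix s :: real
    consider "s < 0" | "0 \<le> s" "s \<le> L" | "L < s" by linarith
    then show "ennreal (2 * s) * emeasure ?M {ds \<in> space ?M. s \<le> sample_min t ds - \<theta>} * indicator {0..} s
        = ennreal (2 / L ^ t) * (ennreal (s * (L - s) ^ t) * indicator {0..L} s)"
    proof cases
      case 2
      have "{ds \<in> space ?M. s \<le> sample_min t ds - \<theta>} = {ds \<in> space ?M. \<theta> + s \<le> sample_min t ds}"
        by auto
      with 2 show ?thesis
        using emeasure_sample_min_ge[of \<theta> "\<theta> + s" t] assms L
        by (simp add: L_def ennreal_mult[symmetric] power_divide diff_diff_eq)
    next
      case 3
      then have "sample_min t ds - \<theta> < s" for ds
        using sample_min_le_one[of t ds] by (simp add: L_def)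
      then have empty: "{ds \<in> space ?M. s \<le> sample_min t ds - \<theta>} = {}"
        by (auto simp: not_less[symmetric])
      show ?thesis using 3 by (simp add: empty)
    qed simp
  qed
  also have "\<dots> = ennreal (2 / L ^ t) * ennreal (L ^ (t + 2) / ((real t + 1) * (real t + 2)))"
    using L by (simp add: nn_integral_cmult nn_integral_linear_times_power)
  also have "\<dots> = ennreal (2 * L\<^sup>2 / ((real t + 1) * (real t + 2)))"
    using L by (simp add: ennreal_mult[symmetric] power_add power2_eq_square)
  finally show ?thesis by (simp add: L_def)
qed

(* The \<rho>-quantile of the uniform distribution on [m, 1], where the sample minimum m is the
   maximum-likelihood estimate of \<theta>. *)
definition min_quantile_policy :: "real \<Rightarrow> nat \<Rightarrow> (nat \<Rightarrow> real) \<Rightarrow> real" where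
  "min_quantile_policy \<rho> t ds = sample_min t ds + \<rho> * (1 - sample_min t ds)"

lemma admissible_min_quantile_policy: "admissible (min_quantile_policy \<rho>)"
  unfolding admissible_def
proof (intro allI impI)
  fix t :: nat
  have [measurable]: "sample_min t \<in> borel_measurable (PiM {..<t} (\<lambda>_. borel))"
    by (rule borel_measurable_sample_min) simp
  show "min_quantile_policy \<rho> t \<in> borel_measurable (PiM {..<t} (\<lambda>_. borel))"
    unfolding min_quantile_policy_def by measurable
qed

lemma expected_excess_cost_min_quantile_policy_le:
  assumes "0 < h" "0 < b" "\<theta> < 1"
  defines "\<rho> \<equiv> b / (h + b)"
  shows "(\<integral>\<^sup>+ds. ennreal (exp_cost h b (unif_dist \<theta>) (min_quantile_policy \<rho> t ds) - opt_cost h b (unif_dist \<theta>))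
            \<partial>PiM {..<t} (\<lambda>_. unif_dist \<theta>))
         \<le> ennreal ((h + b) * (1 - \<rho>)\<^sup>2 * (1 - \<theta>) * (2 / ((real t + 1) * (real t + 2))))"
proof -
  let ?F = "unif_dist \<theta>" and ?M = "PiM {..<t} (\<lambda>_. unif_dist \<theta>)"
  define K where "K = (h + b) * (1 - \<rho>)\<^sup>2 / (1 - \<theta>)"
  have "0 \<le> K" using assms by (simp add: K_def)
  have [measurable]: "sample_min t \<in> borel_measurable ?M"
    by (rule borel_measurable_sample_min) simp
  have excess_le: "exp_cost h b ?F (min_quantile_policy \<rho> t ds) - opt_cost h b ?F
      \<le> K * (sample_min t ds - \<theta>)\<^sup>2" for ds
  proof -
    have "min_quantile_policy \<rho> t ds - (\<theta> + \<rho> * (1 - \<theta>)) = (1 - \<rho>) * (sample_min t ds - \<theta>)"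
      unfolding min_quantile_policy_def by (simp add: algebra_simps)
    then show ?thesis
      using excess_cost_unif_dist_le[OF assms(1-3), of "min_quantile_policy \<rho> t ds"]
      by (simp add: K_def \<rho>_def power_mult_distrib)
  qed
  have "(\<integral>\<^sup>+ds. ennreal (exp_cost h b ?F (min_quantile_policy \<rho> t ds) - opt_cost h b ?F) \<partial>?M)
      \<le> (\<integral>\<^sup>+ds. ennreal K * ennreal ((sample_min t ds - \<theta>)\<^sup>2) \<partial>?M)"
    using excess_le \<open>0 \<le> K\<close>
    by (intro nn_integral_mono) (simp add: ennreal_mult[symmetric] ennreal_leI)
  also have "\<dots> = ennreal K * ennreal (2 * (1 - \<theta>)\<^sup>2 / ((real t + 1) * (real t + 2)))"
    by (simp add: nn_integral_cmult nn_integral_sample_min_sq assms(3))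
  also have "\<dots> = ennreal (K * (2 * (1 - \<theta>)\<^sup>2 / ((real t + 1) * (real t + 2))))"
    using \<open>0 \<le> K\<close> by (intro ennreal_mult[symmetric]) auto
  also have "K * (2 * (1 - \<theta>)\<^sup>2 / ((real t + 1) * (real t + 2)))
      = (h + b) * (1 - \<rho>)\<^sup>2 * (1 - \<theta>) * (2 / ((real t + 1) * (real t + 2)))"
    using assms(3) by (simp add: K_def power2_eq_square)
  finally show ?thesis .
qed

lemma sum_two_over_consecutive_products:
  "(\<Sum>t=1..T. 2 / ((real t + 1) * (real t + 2))) = 1 - 2 / (real T + 2)"
proof (induction T)
  case (Suc T)
  have "2 / ((real T + 2) * (real T + 3)) = 2 / (real T + 2) - 2 / (real T + 3)"
    by (simp add: field_simps)
  with Suc.IH show ?case by (simp add: add.commute)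
qed simp

lemma regret_min_quantile_policy_le:
  assumes "0 < h" "0 < b" "\<theta> < 1"
  defines "\<rho> \<equiv> b / (h + b)"
  shows "regret h b (min_quantile_policy \<rho>) (unif_dist \<theta>) T \<le> ennreal ((h + b) * (1 - \<rho>)\<^sup>2 * (1 - \<theta>))"
proof -
  define c where "c = (h + b) * (1 - \<rho>)\<^sup>2 * (1 - \<theta>)"
  have "0 \<le> c" using assms by (simp add: c_def)
  have "regret h b (min_quantile_policy \<rho>) (unif_dist \<theta>) T
      \<le> (\<Sum>t=1..T. ennreal (c * (2 / ((real t + 1) * (real t + 2)))))"
    unfolding regret_def c_def \<rho>_def
    by (intro sum_mono expected_excess_cost_min_quantile_policy_le assms)
  also have "\<dots> = ennreal (c * (\<Sum>t=1..T. 2 / ((real t + 1) * (real t + 2))))"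
    using \<open>0 \<le> c\<close> by (simp add: sum_distrib_left del: times_divide_eq_right)
  also have "\<dots> = ennreal (c * (1 - 2 / (real T + 2)))"
    by (simp only: sum_two_over_consecutive_products)
  also have "\<dots> \<le> ennreal c"
    using \<open>0 \<le> c\<close> by (intro ennreal_leI) (simp add: algebra_simps)
  finally show ?thesis by (simp add: c_def)
qed

theorem theoremD2:
  fixes h b :: real and T :: nat
  assumes "h > 0" and "b > 0" and "T \<ge> 1"
  shows "(INF \<pi>\<in>{\<pi>. admissible \<pi>}. SUP \<theta>\<in>{0..1/2}. regret h b \<pi> (unif_dist \<theta>) T)
           \<le> ennreal (((b/(h+b))\<^sup>2 + (1 - b/(h+b))\<^sup>2) * (h + b))"
proof -
  \<comment> \<open>The bound holds for T = 0 as well.\<close>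
  define \<rho> where "\<rho> = b / (h + b)"
  have "(INF \<pi>\<in>{\<pi>. admissible \<pi>}. SUP \<theta>\<in>{0..1/2}. regret h b \<pi> (unif_dist \<theta>) T)
      \<le> (SUP \<theta>\<in>{0..1/2}. regret h b (min_quantile_policy \<rho>) (unif_dist \<theta>) T)"
    by (rule INF_lower) (simp add: admissible_min_quantile_policy)
  also have "\<dots> \<le> ennreal ((\<rho>\<^sup>2 + (1 - \<rho>)\<^sup>2) * (h + b))"
  proof (rule SUP_least)
    fix \<theta> :: real
    assume "\<theta> \<in> {0..1/2}"
    then have "regret h b (min_quantile_policy \<rho>) (unif_dist \<theta>) T \<le> ennreal ((h + b) * (1 - \<rho>)\<^sup>2 * (1 - \<theta>))"
      using regret_min_quantile_policy_le assms(1,2) by (simp add: \<rho>_def)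
    also have "\<dots> \<le> ennreal ((\<rho>\<^sup>2 + (1 - \<rho>)\<^sup>2) * (h + b))"
      using \<open>\<theta> \<in> {0..1/2}\<close> assms(1,2)
      by (intro ennreal_leI) (simp add: algebra_simps mult_left_le)
    finally show "regret h b (min_quantile_policy \<rho>) (unif_dist \<theta>) T \<le> ennreal ((\<rho>\<^sup>2 + (1 - \<rho>)\<^sup>2) * (h + b))" .
  qed
  finally show ?thesis unfolding \<rho>_def .
qed

end
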